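(* There exist constants $C^+,C^->0$ such that for every irrational real number $x$: (a) $B(x)<\infty$ if and only if $B_0(x)+B_0(-x)<\infty$, and in that case $$\bigl|B(x)-2B_0^+(x)\bigr|\le C^+,\qquad\text{where } B_0^+(x)=\tfrac12\bigl(B_0(x)+B_0(-x)\bigr);$$ (b) if $B_0(x)$ and $B_0(-x)$ are both finite, then the series defining $W(x)$ converges and $$\bigl|W(x)-2B_0^-(x)\bigr|\le C^-,\qquad\text{where } B_0^-(x)=\tfrac12\bigl(B_0(x)-B_0(-x)\bigr).$$
   Context: For real $x$ let $\{x\}=x-\lfloor x\rfloor$. The Gauss map is $A(y)=\{1/y\}$ and the by-excess map is $A_0(y)=\lfloor 1/y+1\rfloor-1/y$, for $y\in(0,1)$; for irrational $y\in(0,1)$ both $A(y)$ and $A_0(y)$ are irrational numbers in $(0,1)$ and $A_0(y)=1-A(y)$. Iterates are written $A^j$, $A_0^j$, with $A^0=A_0^0=\mathrm{id}$, and empty products equal $1$. For irrational $x$ put $y=\{x\}$ and define $$B(x)=\sum_{j\ge0}\Bigl(\prod_{k=0}^{j-1}A^k(y)\Bigr)\log\frac{1}{A^j(y)}\in[0,+\infty]\quad(\text{Brjuno function}),$$ $$B_0(x)=\sum_{j\ge0}\Bigl(\prod_{k=0}^{j-1}A_0^k(y)\Bigr)\log\frac{1}{A_0^j(y)}\in[0,+\infty]\quad(\text{semi-Brjuno function}),$$ and the Wilton series $W(x)=\sum_{j\ge0}(-1)^j\Bigl(\prod_{k=0}^{j-1}A^k(y)\Bigr)\log\frac{1}{A^j(y)}$;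 we say $W(x)$ converges if its partial sums converge, and then $W(x)$ denotes the limit. All three are $1$-periodic in $x$ by construction (note that $B_0$ is in general not even). The $j=0$ term of each series is $-\log y$. *)

theory Defs
  imports "HOL-Analysis.Analysis"
begin

definition gauss_map :: "real \<Rightarrow> real" where
  "gauss_map y = frac (1 / y)"

definition excess_map :: "real \<Rightarrow> real" where
  "excess_map y = of_int \<lfloor>1 / y + 1\<rfloor> - 1 / y"

definition brjuno_term :: "(real \<Rightarrow> real) \<Rightarrow> real \<Rightarrow> nat \<Rightarrow> real" where
  "brjuno_term T x j =
     (\<Prod>k<j. (T ^^ k) (frac x)) * ln (1 / (T ^^ j) (frac x))"

definition brjuno :: "real \<Rightarrow> ereal" where
  "brjuno x = (\<Sum>j. ereal (brjuno_term gauss_map x j))"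

definition semi_brjuno :: "real \<Rightarrow> ereal" where
  "semi_brjuno x = (\<Sum>j. ereal (brjuno_term excess_map x j))"

definition wilton_partial :: "real \<Rightarrow> nat \<Rightarrow> real" where
  "wilton_partial x n = (\<Sum>j<n. (-1) ^ j * brjuno_term gauss_map x j)"

definition wilton_converges :: "real \<Rightarrow> bool" where
  "wilton_converges x \<longleftrightarrow> convergent (wilton_partial x)"

definition wilton :: "real \<Rightarrow> real" where
  "wilton x = lim (wilton_partial x)"

end

theory Submission
  imports Defs
begin

text \<open>Split the Brjuno series of \<open>y = {x}\<close> into its even- and odd-indexed terms.
  If \<open>1/z = k + 1 + A(z)\<close>, the by-excess orbit of \<open>1 - z\<close> is
  \<open>1 - 1/(1/z), 1 - 1/(1/z - 1), \<dots>\<close> and reaches \<open>1 - A(A(z))\<close> after \<open>k + 1\<close> steps,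
  at cost \<open>z log (1 / A(z)) + O(z k) = z log (1 / A(z)) + O(1)\<close>. Iterating, the partial sums of
  the \<open>B\<^sub>0\<close>-series of \<open>1 - z\<close> and of the odd part of the Brjuno series of \<open>z\<close> dominate
  each other up to an additive constant; as \<open>A\<^sub>0(y) = 1 - A(y)\<close>, the same holds for the
  \<open>B\<^sub>0\<close>-series of \<open>y\<close> and the even part. With \<open>{-x} = 1 - y\<close> this gives
  \<open>B = even + odd \<approx> B\<^sub>0(x) + B\<^sub>0(-x)\<close> and \<open>W = even - odd \<approx> B\<^sub>0(x) - B\<^sub>0(-x)\<close>.\<close>

definition orbit_term :: "(real \<Rightarrow> real) \<Rightarrow> real \<Rightarrow> nat \<Rightarrow> real" where
  "orbit_term T y j = (\<Prod>k<j. (T ^^ k) y) * ln (1 / (T ^^ j) y)"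

definition orbit_sum :: "(real \<Rightarrow> real) \<Rightarrow> real \<Rightarrow> nat \<Rightarrow> real" where
  "orbit_sum T y n = (\<Sum>j<n. orbit_term T y j)"

lemma orbit_term_0: "orbit_term T y 0 = ln (1 / y)"
  by (simp add: orbit_term_def)

lemma orbit_term_Suc: "orbit_term T y (Suc j) = y * orbit_term T (T y) j"
  unfolding orbit_term_def prod.lessThan_Suc_shift
  by (simp add: funpow_Suc_right del: funpow.simps)

lemma orbit_sum_0 [simp]: "orbit_sum T y 0 = 0"
  by (simp add: orbit_sum_def)

lemma orbit_sum_Suc: "orbit_sum T y (Suc n) = ln (1 / y) + y * orbit_sum T (T y) n"
  unfolding orbit_sum_def sum.lessThan_Suc_shift
  by (simp add: orbit_term_0 orbit_term_Suc sum_distrib_left)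

lemma orbit_term_nonneg:
  assumes T: "\<And>w. T w \<in> {0..1}" and y: "y \<in> {0..1}"
  shows "0 \<le> orbit_term T y j"
proof -
  have iter: "(T ^^ k) y \<in> {0..1}" for k
    using y T by (cases k) auto
  have "0 \<le> ln (1 / w)" if "w \<in> {0..1}" for w :: real
    \<comment> \<open>also at \<open>w = 0\<close>, where \<open>1 / 0 = 0\<close> and \<open>ln 0 = 0\<close>\<close>
    using that by (cases "w = 0") auto
  then show ?thesis
    unfolding orbit_term_def using iter by (auto intro!: mult_nonneg_nonneg prod_nonneg)
qed

lemma orbit_sum_nonneg:
  "(\<And>w. T w \<in> {0..1}) \<Longrightarrow> y \<in> {0..1} \<Longrightarrow> 0 \<le> orbit_sum T y n"
  unfolding orbit_sum_def by (auto intro!: sum_nonneg orbit_term_nonneg)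

lemma gauss_map_range: "gauss_map y \<in> {0..1}"
  by (simp add: gauss_map_def less_imp_le[OF frac_lt_1])

lemma excess_map_eq: "excess_map y = 1 - gauss_map y"
  by (simp add: excess_map_def gauss_map_def frac_def)

lemma excess_map_range: "excess_map y \<in> {0..1}"
  using gauss_map_range[of y] by (simp add: excess_map_eq)

lemma orbit_sum_excess_one_minus_gauss_nonneg: "0 \<le> orbit_sum excess_map (1 - gauss_map y) n"
  using gauss_map_range[of y] excess_map_range by (intro orbit_sum_nonneg) auto

lemma gauss_map_gt_one: "1 < w \<Longrightarrow> gauss_map w = 1 / w"
  by (simp add: gauss_map_def frac_eq)

lemma excess_map_one_minus_inverse:
  assumes "1 < r"
  shows "excess_map (1 - 1 / r) = 1 - gauss_map (r - 1)"
proof -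
  have "1 / (1 - 1 / r) = 1 / (r - 1) + 1"
    using assms by (simp add: field_simps)
  then show ?thesis
    by (simp add: excess_map_eq gauss_map_def frac_1_eq)
qed

definition irrational_unit :: "real set" where
  "irrational_unit = {0<..<1} - \<rat>"

lemma frac_in_irrational_unit:
  assumes "x \<notin> \<rat>"
  shows "frac x \<in> irrational_unit"
proof -
  have "x \<notin> \<int>"
    using assms Ints_subset_Rats by blast
  moreover have "frac x \<notin> \<rat>"
    using assms Rats_add Rats_of_int unfolding frac_def by (metis diff_add_cancel)
  ultimately show ?thesis
    by (simp add: irrational_unit_def frac_lt_1)
qed

lemma gauss_map_irrational_unit:
  assumes "y \<in> irrational_unit"
  shows "gauss_map y \<in> irrational_unit"
proof -
  have "1 / y \<notin> \<rat>"
    using assms unfolding irrational_unit_def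
    by (metis DiffD2 Rats_divide Rats_1 divide_divide_eq_right div_by_1 mult_1)
  then show ?thesis
    by (simp add: gauss_map_def frac_in_irrational_unit)
qed

lemma inverse_decomposition:
  assumes "z \<in> irrational_unit"
  obtains k :: nat where "1 / z = real k + 1 + gauss_map z"
proof
  have "1 < 1 / z"
    using assms by (simp add: irrational_unit_def)
  then have "\<lfloor>1 / z\<rfloor> = int (nat \<lfloor>1 / z\<rfloor> - 1) + 1"
    by linarith
  then have "real_of_int \<lfloor>1 / z\<rfloor> = real (nat \<lfloor>1 / z\<rfloor> - 1) + 1"
    by (metis of_int_of_nat_eq of_int_1 of_int_add)
  then show "1 / z = real (nat \<lfloor>1 / z\<rfloor> - 1) + 1 + gauss_map z"
    by (simp add: gauss_map_def frac_def)
qed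

lemma mult_ln_div_pred_near_one:
  fixes s :: real
  assumes "1 < s" "s < 2"
  shows "ln (1 / (s - 1)) \<le> s * ln (s / (s - 1))"
    and "s * ln (s / (s - 1)) \<le> ln (1 / (s - 1)) + 3"
proof -
  have split: "s * ln (s / (s - 1)) = s * ln s + ln (1 / (s - 1)) + (s - 1) * ln (1 / (s - 1))"
    using assms by (simp add: ln_div algebra_simps)
  have "0 \<le> ln s" "0 \<le> ln (1 / (s - 1))"
    using assms by auto
  then show "ln (1 / (s - 1)) \<le> s * ln (s / (s - 1))"
    unfolding split using assms by simp
  have "ln s \<le> 1"
    using ln_le_minus_one[of s] assms by simp
  then have "s * ln s \<le> 2"
    using mult_mono[of s 2 "ln s" 1] assms \<open>0 \<le> ln s\<close> by simp
  moreover have "(s - 1) * ln (1 / (s - 1)) \<le> (s - 1) * (1 / (s - 1) - 1)"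
    using assms by (intro mult_left_mono ln_le_minus_one) auto
  moreover have "(s - 1) * (1 / (s - 1) - 1) = 2 - s"
    using assms by (simp add: field_simps)
  ultimately show "s * ln (s / (s - 1)) \<le> ln (1 / (s - 1)) + 3"
    unfolding split using assms by simp
qed

lemma mult_ln_div_pred_le_two:
  fixes s :: real
  assumes "2 \<le> s"
  shows "0 \<le> s * ln (s / (s - 1))" and "s * ln (s / (s - 1)) \<le> 2"
proof -
  show "0 \<le> s * ln (s / (s - 1))"
    using assms by (intro mult_nonneg_nonneg) auto
  have "s * ln (s / (s - 1)) \<le> s * (s / (s - 1) - 1)"
    using ln_le_minus_one[of "s / (s - 1)"] assms by (intro mult_left_mono) auto
  also have "\<dots> = s / (s - 1)"
    using assms by (simp add: field_simps)
  also have "\<dots> \<le> 2"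
    using assms by (simp add: field_simps)
  finally show "s * ln (s / (s - 1)) \<le> 2" .
qed

lemma scaled_excess_sum_Suc:
  assumes "1 < r"
  shows "r * orbit_sum excess_map (1 - 1 / r) (Suc N)
    = r * ln (r / (r - 1)) + (r - 1) * orbit_sum excess_map (1 - gauss_map (r - 1)) N"
proof -
  have "1 / (1 - 1 / r) = r / (r - 1)" "r * (1 - 1 / r) = r - 1"
    using assms by (auto simp: field_simps)
  then show ?thesis
    unfolding orbit_sum_Suc excess_map_one_minus_inverse[OF assms] distrib_left
    by (simp add: mult.assoc[symmetric])
qed

lemma scaled_excess_sum_Suc_gt_two:
  assumes "2 < r"
  shows "r * orbit_sum excess_map (1 - 1 / r) (Suc N)
    = r * ln (r / (r - 1)) + (r - 1) * orbit_sum excess_map (1 - 1 / (r - 1)) N"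
  using scaled_excess_sum_Suc[of r N] gauss_map_gt_one[of "r - 1"] assms by simp

text \<open>With \<open>r = 1/z\<close> and \<open>t = A(z)\<close>, the next two lemmas account for the \<open>k + 1\<close>
  by-excess steps leading from \<open>1 - z\<close> to \<open>1 - A(A(z))\<close>.\<close>

lemma scaled_excess_sum_upper:
  assumes "0 < t" "t < 1"
  shows "(real k + 1 + t) * orbit_sum excess_map (1 - 1 / (real k + 1 + t)) N
    \<le> ln (1 / t) + 2 * real k + 3 + t * orbit_sum excess_map (1 - gauss_map t) (N - Suc k)"
proof (induction k arbitrary: N)
  case 0
  have "0 \<le> ln (1 / t)" "0 \<le> t * orbit_sum excess_map (1 - gauss_map t) n" for n
    using assms orbit_sum_excess_one_minus_gauss_nonneg by auto
  moreover have "(1 + t) * orbit_sum excess_map (1 - 1 / (1 + t)) (Suc n)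
    \<le> ln (1 / t) + 3 + t * orbit_sum excess_map (1 - gauss_map t) n" for n
    using scaled_excess_sum_Suc[of "1 + t" n] mult_ln_div_pred_near_one(2)[of "1 + t"] assms
    by simp
  ultimately show ?case
    by (cases N) auto
next
  case (Suc k)
  let ?r = "real (Suc k) + 1 + t"
  have r: "2 < ?r" and r1: "?r - 1 = real k + 1 + t"
    using assms by simp_all
  have step: "?r * orbit_sum excess_map (1 - 1 / ?r) (Suc n)
    = ?r * ln (?r / (?r - 1)) + (real k + 1 + t) * orbit_sum excess_map (1 - 1 / (real k + 1 + t)) n" for n
    using scaled_excess_sum_Suc_gt_two[OF r, of n] unfolding r1 .
  note IH = Suc.IH
  show ?case
  proof (cases N)
    case 0
    then show ?thesis
      using assms orbit_sum_excess_one_minus_gauss_nonneg[of t] by simp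
  next
    case (Suc n)
    have "?r * orbit_sum excess_map (1 - 1 / ?r) N
      = ?r * ln (?r / (?r - 1)) + (real k + 1 + t) * orbit_sum excess_map (1 - 1 / (real k + 1 + t)) n"
      using step Suc by simp
    also have "\<dots> \<le> 2 + (ln (1 / t) + 2 * real k + 3
        + t * orbit_sum excess_map (1 - gauss_map t) (n - Suc k))"
      using mult_ln_div_pred_le_two(2)[OF less_imp_le[OF r]] IH[of n] by (rule add_mono)
    finally show ?thesis
      using Suc by simp
  qed
qed

lemma scaled_excess_sum_lower:
  assumes "0 < t" "t < 1"
  shows "ln (1 / t) + t * orbit_sum excess_map (1 - gauss_map t) N
    \<le> (real k + 1 + t) * orbit_sum excess_map (1 - 1 / (real k + 1 + t)) (N + Suc k)"
proof (induction k)
  case 0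
  show ?case
    using scaled_excess_sum_Suc[of "1 + t" N] mult_ln_div_pred_near_one(1)[of "1 + t"] assms
    by simp
next
  case (Suc k)
  let ?r = "real (Suc k) + 1 + t"
  have r: "2 < ?r" and r1: "?r - 1 = real k + 1 + t"
    using assms by simp_all
  have step: "?r * orbit_sum excess_map (1 - 1 / ?r) (Suc n)
    = ?r * ln (?r / (?r - 1)) + (real k + 1 + t) * orbit_sum excess_map (1 - 1 / (real k + 1 + t)) n" for n
    using scaled_excess_sum_Suc_gt_two[OF r, of n] unfolding r1 .
  show ?case
    using step[of "N + Suc k"] Suc.IH mult_ln_div_pred_le_two(1)[OF less_imp_le[OF r]] by simp
qed

definition gauss_even_sum :: "nat \<Rightarrow> real \<Rightarrow> real" where
  "gauss_even_sum M z = (\<Sum>m<M. orbit_term gauss_map z (2 * m))"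

definition gauss_odd_sum :: "nat \<Rightarrow> real \<Rightarrow> real" where
  "gauss_odd_sum M z = (\<Sum>m<M. orbit_term gauss_map z (2 * m + 1))"

lemma gauss_odd_sum_Suc:
  "gauss_odd_sum (Suc M) z
    = z * ln (1 / gauss_map z) + z * gauss_map z * gauss_odd_sum M (gauss_map (gauss_map z))"
proof -
  have "orbit_term gauss_map z (2 * Suc m + 1)
      = z * gauss_map z * orbit_term gauss_map (gauss_map (gauss_map z)) (2 * m + 1)" for m
    using orbit_term_Suc[of gauss_map z "Suc (2 * m + 1)"]
      orbit_term_Suc[of gauss_map "gauss_map z" "2 * m + 1"] by simp
  then show ?thesis
    unfolding gauss_odd_sum_def sum.lessThan_Suc_shift
    by (simp add: orbit_term_Suc[of gauss_map z 0] orbit_term_0 sum_distrib_left)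
qed

lemma gauss_even_sum_Suc:
  "gauss_even_sum (Suc M) z = ln (1 / z) + z * gauss_odd_sum M (gauss_map z)"
proof -
  have "orbit_term gauss_map z (2 * Suc m) = z * orbit_term gauss_map (gauss_map z) (2 * m + 1)" for m
    using orbit_term_Suc[of gauss_map z "2 * m + 1"] by simp
  then show ?thesis
    unfolding gauss_even_sum_def gauss_odd_sum_def sum.lessThan_Suc_shift
    by (simp add: orbit_term_0 sum_distrib_left)
qed

lemma excess_sum_one_minus_upper:
  assumes z: "z \<in> irrational_unit" and k: "1 / z = real k + 1 + gauss_map z"
  shows "orbit_sum excess_map (1 - z) N
    \<le> z * ln (1 / gauss_map z) + z * (2 * real k + 3)
      + z * gauss_map z * orbit_sum excess_map (1 - gauss_map (gauss_map z)) (N - Suc k)"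
proof -
  have t: "0 < gauss_map z" "gauss_map z < 1" and "0 < z"
    using z gauss_map_irrational_unit[OF z] by (auto simp: irrational_unit_def)
  have "(1 / z) * orbit_sum excess_map (1 - z) N
    \<le> ln (1 / gauss_map z) + 2 * real k + 3
      + gauss_map z * orbit_sum excess_map (1 - gauss_map (gauss_map z)) (N - Suc k)"
    using scaled_excess_sum_upper[OF t, of k N] unfolding k[symmetric] by simp
  from mult_left_mono[OF this, of z] \<open>0 < z\<close> show ?thesis
    by (simp add: algebra_simps)
qed

lemma excess_sum_one_minus_lower:
  assumes z: "z \<in> irrational_unit" and k: "1 / z = real k + 1 + gauss_map z"
  shows "z * ln (1 / gauss_map z) + z * gauss_map z * orbit_sum excess_map (1 - gauss_map (gauss_map z)) N
    \<le> orbit_sum excess_map (1 - z) (N + Suc k)"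
proof -
  have t: "0 < gauss_map z" "gauss_map z < 1" and "0 < z"
    using z gauss_map_irrational_unit[OF z] by (auto simp: irrational_unit_def)
  have "ln (1 / gauss_map z) + gauss_map z * orbit_sum excess_map (1 - gauss_map (gauss_map z)) N
    \<le> (1 / z) * orbit_sum excess_map (1 - z) (N + Suc k)"
    using scaled_excess_sum_lower[OF t, of N k] unfolding k[symmetric] by simp
  from mult_left_mono[OF this, of z] \<open>0 < z\<close> show ?thesis
    by (simp add: algebra_simps)
qed

lemma excess_sum_le_odd_sum:
  "z \<in> irrational_unit \<Longrightarrow> \<exists>M. orbit_sum excess_map (1 - z) N \<le> gauss_odd_sum M z + 8"
proof (induction N arbitrary: z rule: less_induct)
  case (less N)
  obtain k where k: "1 / z = real k + 1 + gauss_map z"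
    using inverse_decomposition[OF less.prems] .
  show ?case
  proof (cases N)
    case 0
    then show ?thesis
      by (intro exI[of _ 0]) (simp add: gauss_odd_sum_def)
  next
    case (Suc n)
    let ?g = "gauss_map z"
    have g: "0 \<le> z" "0 \<le> ?g" "z * (real k + 1 + ?g) = 1"
      using less.prems gauss_map_irrational_unit[OF less.prems] k
      by (auto simp: irrational_unit_def field_simps)
    have "N - Suc k < N"
      using Suc by simp
    then obtain M where M: "orbit_sum excess_map (1 - gauss_map ?g) (N - Suc k) \<le> gauss_odd_sum M (gauss_map ?g) + 8"
      using less.IH gauss_map_irrational_unit[OF gauss_map_irrational_unit[OF less.prems]] by blast
    have "orbit_sum excess_map (1 - z) N
      \<le> z * ln (1 / ?g) + z * (2 * real k + 3) + z * ?g * (gauss_odd_sum M (gauss_map ?g) + 8)"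
      using excess_sum_one_minus_upper[OF less.prems k, of N] mult_left_mono[OF M, of "z * ?g"] g
      by simp
    also have "\<dots> = gauss_odd_sum (Suc M) z + z * (2 * real k + 3 + 8 * ?g)"
      by (simp add: gauss_odd_sum_Suc algebra_simps)
    also have "\<dots> = gauss_odd_sum (Suc M) z + 8 - z * (6 * real k + 5)"
      using g(3) by (simp add: algebra_simps)
    also have "\<dots> \<le> gauss_odd_sum (Suc M) z + 8"
      using g by simp
    finally show ?thesis ..
  qed
qed

lemma odd_sum_le_excess_sum:
  "z \<in> irrational_unit \<Longrightarrow> \<exists>N. gauss_odd_sum M z \<le> orbit_sum excess_map (1 - z) N"
proof (induction M arbitrary: z)
  case 0
  show ?case
    by (auto simp: gauss_odd_sum_def intro: exI[of _ 0])
next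
  case (Suc M)
  obtain k where k: "1 / z = real k + 1 + gauss_map z"
    using inverse_decomposition[OF Suc.prems] .
  let ?g = "gauss_map z"
  have g: "0 \<le> z * ?g"
    using Suc.prems gauss_map_irrational_unit[OF Suc.prems] by (simp add: irrational_unit_def)
  obtain N where N: "gauss_odd_sum M (gauss_map ?g) \<le> orbit_sum excess_map (1 - gauss_map ?g) N"
    using Suc.IH gauss_map_irrational_unit Suc.prems by blast
  have "gauss_odd_sum (Suc M) z
    \<le> z * ln (1 / ?g) + z * ?g * orbit_sum excess_map (1 - gauss_map ?g) N"
    unfolding gauss_odd_sum_Suc using mult_left_mono[OF N g] by simp
  also have "\<dots> \<le> orbit_sum excess_map (1 - z) (N + Suc k)"
    by (rule excess_sum_one_minus_lower[OF Suc.prems k])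
  finally show ?case ..
qed

lemma excess_sum_le_even_sum:
  assumes y: "y \<in> irrational_unit"
  shows "\<exists>M. orbit_sum excess_map y N \<le> gauss_even_sum M y + 8"
proof (cases N)
  case 0
  then show ?thesis
    by (intro exI[of _ 0]) (simp add: gauss_even_sum_def)
next
  case (Suc n)
  obtain M where M: "orbit_sum excess_map (1 - gauss_map y) n \<le> gauss_odd_sum M (gauss_map y) + 8"
    using excess_sum_le_odd_sum gauss_map_irrational_unit[OF y] by blast
  have "0 < y" "y < 1"
    using y by (auto simp: irrational_unit_def)
  then have "orbit_sum excess_map y N \<le> ln (1 / y) + y * (gauss_odd_sum M (gauss_map y) + 8)"
    unfolding Suc orbit_sum_Suc excess_map_eq[of y] using M by (simp add: mult_left_mono)
  also have "\<dots> \<le> gauss_even_sum (Suc M) y + 8"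
    unfolding gauss_even_sum_Suc using \<open>y < 1\<close> by (simp add: algebra_simps)
  finally show ?thesis ..
qed

lemma even_sum_le_excess_sum:
  assumes y: "y \<in> irrational_unit"
  shows "\<exists>N. gauss_even_sum M y \<le> orbit_sum excess_map y N"
proof (cases M)
  case 0
  then show ?thesis
    by (auto simp: gauss_even_sum_def intro: exI[of _ 0])
next
  case (Suc m)
  obtain N where N: "gauss_odd_sum m (gauss_map y) \<le> orbit_sum excess_map (1 - gauss_map y) N"
    using odd_sum_le_excess_sum gauss_map_irrational_unit[OF y] by blast
  have "0 < y"
    using y by (simp add: irrational_unit_def)
  then have "gauss_even_sum M y \<le> orbit_sum excess_map y (Suc N)"
    unfolding Suc gauss_even_sum_Suc orbit_sum_Suc excess_map_eq[of y] using N by (simp add: mult_left_mono)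
  then show ?thesis ..
qed

lemma suminf_ereal_le_by_partial_sums:
  fixes a c :: "nat \<Rightarrow> real"
  assumes a: "\<And>j. 0 \<le> a j" and c: "\<And>j. 0 \<le> c j"
    and le: "\<And>n. \<exists>m. sum a {..<n} \<le> sum c {..<m} + C"
  shows "(\<Sum>j. ereal (a j)) \<le> (\<Sum>j. ereal (c j)) + ereal C"
proof (rule suminf_bound)
  show "\<forall>n. (\<Sum>j<n. ereal (a j)) \<le> (\<Sum>j. ereal (c j)) + ereal C"
  proof
    fix n
    obtain m where m: "sum a {..<n} \<le> sum c {..<m} + C"
      using le by blast
    have "(\<Sum>j<n. ereal (a j)) \<le> (\<Sum>j<m. ereal (c j)) + ereal C"
      using m by simp
    also have "\<dots> \<le> (\<Sum>j. ereal (c j)) + ereal C"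
      using c by (intro add_right_mono suminf_upper) simp
    finally show "(\<Sum>j<n. ereal (a j)) \<le> (\<Sum>j. ereal (c j)) + ereal C" .
  qed
qed (simp add: a)

lemma odd_if_notin_range_double: "(n::nat) \<notin> range (\<lambda>m. 2 * m) \<Longrightarrow> odd n"
  by (auto elim: evenE)

lemma even_if_notin_range_double_Suc: "(n::nat) \<notin> range (\<lambda>m. 2 * m + 1) \<Longrightarrow> even n"
  by (metis oddE rangeI)

lemma strict_mono_double: "strict_mono (\<lambda>m::nat. 2 * m)" "strict_mono (\<lambda>m::nat. 2 * m + 1)"
  by (auto simp: strict_mono_def)

lemma suminf_ereal_even_odd:
  fixes b :: "nat \<Rightarrow> real"
  assumes "\<And>j. 0 \<le> b j"
  shows "(\<Sum>j. ereal (b j)) = (\<Sum>m. ereal (b (2 * m))) + (\<Sum>m. ereal (b (2 * m + 1)))"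
proof -
  define be where "be j = (if even j then ereal (b j) else 0)" for j
  define bo where "bo j = (if odd j then ereal (b j) else 0)" for j
  have "(\<Sum>m. ereal (b (2 * m))) = suminf be"
    using suminf_mono_reindex[OF strict_mono_double(1), of be] odd_if_notin_range_double
    by (simp add: be_def)
  moreover have "(\<Sum>m. ereal (b (2 * m + 1))) = suminf bo"
    using suminf_mono_reindex[OF strict_mono_double(2), of bo] even_if_notin_range_double_Suc
    by (simp add: bo_def)
  moreover have "(\<lambda>j. ereal (b j)) = (\<lambda>j. be j + bo j)"
    by (auto simp: be_def bo_def)
  moreover have "0 \<le> be j" "0 \<le> bo j" for j
    using assms by (simp_all add: be_def bo_def)
  ultimately show ?thesis
    by (simp add: suminf_add_ereal)
qed

lemma sums_alternating_even_odd:
  fixes b :: "nat \<Rightarrow> real"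
  assumes "summable (\<lambda>m. b (2 * m))" "summable (\<lambda>m. b (2 * m + 1))"
  shows "(\<lambda>j. (-1) ^ j * b j) sums ((\<Sum>m. b (2 * m)) - (\<Sum>m. b (2 * m + 1)))"
proof -
  have "(\<lambda>j. if even j then b j else 0) sums (\<Sum>m. b (2 * m))"
    using sums_mono_reindex[OF strict_mono_double(1), of "\<lambda>j. if even j then b j else 0"]
      odd_if_notin_range_double summable_sums[OF assms(1)]
    by simp
  moreover have "(\<lambda>j. if odd j then b j else 0) sums (\<Sum>m. b (2 * m + 1))"
    using sums_mono_reindex[OF strict_mono_double(2), of "\<lambda>j. if odd j then b j else 0"]
      even_if_notin_range_double_Suc summable_sums[OF assms(2)]
    by simp
  moreover have "(\<lambda>j. (-1) ^ j * b j) = (\<lambda>j. (if even j then b j else 0) - (if odd j then b j else 0))"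
    by (rule ext) simp
  ultimately show ?thesis
    by (simp add: sums_diff)
qed

lemma ereal_sum_sandwich:
  fixes a b f g :: ereal and c :: real
  assumes "0 \<le> a" "0 \<le> b" "a \<le> f" "f \<le> a + ereal c" "b \<le> g" "g \<le> b + ereal c"
  shows "a + b < \<infinity> \<longleftrightarrow> f + g < \<infinity>"
    and "a + b < \<infinity> \<Longrightarrow>
      \<bar>real_of_ereal (a + b) - (real_of_ereal f + real_of_ereal g)\<bar> \<le> 2 * c"
    and "f < \<infinity> \<Longrightarrow> g < \<infinity> \<Longrightarrow>
      \<bar>(real_of_ereal a - real_of_ereal b) - (real_of_ereal f - real_of_ereal g)\<bar> \<le> c"
  using assms by (cases a; cases b; cases f; cases g; simp)+

definition gauss_even_series :: "real \<Rightarrow> ereal" where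
  "gauss_even_series y = (\<Sum>m. ereal (orbit_term gauss_map y (2 * m)))"

definition gauss_odd_series :: "real \<Rightarrow> ereal" where
  "gauss_odd_series y = (\<Sum>m. ereal (orbit_term gauss_map y (2 * m + 1)))"

lemma brjuno_term_eq_orbit_term: "brjuno_term T x j = orbit_term T (frac x) j"
  by (simp add: brjuno_term_def orbit_term_def)

lemma frac_range: "frac x \<in> {0..1}"
  by (simp add: less_imp_le[OF frac_lt_1])

lemma gauss_series_nonneg: "0 \<le> gauss_even_series (frac x)" "0 \<le> gauss_odd_series (frac x)"
  unfolding gauss_even_series_def gauss_odd_series_def
  using orbit_term_nonneg[OF _ frac_range] gauss_map_range by (simp_all add: suminf_0_le)

lemma brjuno_eq_even_odd: "brjuno x = gauss_even_series (frac x) + gauss_odd_series (frac x)"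
  unfolding brjuno_def brjuno_term_eq_orbit_term gauss_even_series_def gauss_odd_series_def
  using orbit_term_nonneg[OF _ frac_range] gauss_map_range by (blast intro: suminf_ereal_even_odd)

lemma semi_brjuno_bounds:
  assumes "x \<notin> \<rat>"
  shows "gauss_even_series (frac x) \<le> semi_brjuno x"
    and "semi_brjuno x \<le> gauss_even_series (frac x) + 8"
    and "gauss_odd_series (frac x) \<le> semi_brjuno (- x)"
    and "semi_brjuno (- x) \<le> gauss_odd_series (frac x) + 8"
proof -
  define y where "y = frac x"
  have y: "y \<in> irrational_unit"
    using frac_in_irrational_unit[OF assms] by (simp add: y_def)
  have "x \<notin> \<int>"
    using assms Ints_subset_Rats by blast
  then have minus: "frac (- x) = 1 - y"
    by (simp add: frac_neg y_def)
  have "y \<in> {0..1}" "1 - y \<in> {0..1}"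
    using y by (auto simp: irrational_unit_def)
  then have nonneg: "0 \<le> orbit_term gauss_map y j" "0 \<le> orbit_term excess_map y j"
      "0 \<le> orbit_term excess_map (1 - y) j" for j
    using gauss_map_range excess_map_range by (auto intro: orbit_term_nonneg)
  show "gauss_even_series (frac x) \<le> semi_brjuno x"
    using suminf_ereal_le_by_partial_sums[of _ _ 0] even_sum_le_excess_sum[OF y] nonneg
    unfolding gauss_even_series_def semi_brjuno_def brjuno_term_eq_orbit_term gauss_even_sum_def
      orbit_sum_def y_def[symmetric] by simp
  show "semi_brjuno x \<le> gauss_even_series (frac x) + 8"
    using suminf_ereal_le_by_partial_sums[of _ _ 8] excess_sum_le_even_sum[OF y] nonneg
    unfolding gauss_even_series_def semi_brjuno_def brjuno_term_eq_orbit_term gauss_even_sum_def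
      orbit_sum_def y_def[symmetric] by simp
  show "gauss_odd_series (frac x) \<le> semi_brjuno (- x)"
    using suminf_ereal_le_by_partial_sums[of _ _ 0] odd_sum_le_excess_sum[OF y] nonneg
    unfolding gauss_odd_series_def semi_brjuno_def brjuno_term_eq_orbit_term gauss_odd_sum_def
      orbit_sum_def minus y_def[symmetric] by simp
  show "semi_brjuno (- x) \<le> gauss_odd_series (frac x) + 8"
    using suminf_ereal_le_by_partial_sums[of _ _ 8] excess_sum_le_odd_sum[OF y] nonneg
    unfolding gauss_odd_series_def semi_brjuno_def brjuno_term_eq_orbit_term gauss_odd_sum_def
      orbit_sum_def minus y_def[symmetric] by simp
qed

lemma brjuno_semi_brjuno_comparison:
  assumes "x \<notin> \<rat>"
  shows "brjuno x < \<infinity> \<longleftrightarrow> semi_brjuno x + semi_brjuno (- x) < \<infinity>"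
    and "brjuno x < \<infinity> \<Longrightarrow>
      \<bar>real_of_ereal (brjuno x) - (real_of_ereal (semi_brjuno x) + real_of_ereal (semi_brjuno (- x)))\<bar> \<le> 16"
  using ereal_sum_sandwich(1,2)[OF gauss_series_nonneg semi_brjuno_bounds[OF assms, unfolded numeral_eq_ereal]]
  by (simp_all add: brjuno_eq_even_odd)

lemma wilton_semi_brjuno_comparison:
  assumes x: "x \<notin> \<rat>" and fin: "semi_brjuno x < \<infinity>" "semi_brjuno (- x) < \<infinity>"
  shows "wilton_converges x"
    and "\<bar>wilton x - (real_of_ereal (semi_brjuno x) - real_of_ereal (semi_brjuno (- x)))\<bar> \<le> 8"
proof -
  let ?b = "orbit_term gauss_map (frac x)"
  have nonneg: "0 \<le> ?b j" for j
    using orbit_term_nonneg[OF _ frac_range] gauss_map_range by blast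
  have "gauss_even_series (frac x) \<noteq> \<infinity>" "gauss_odd_series (frac x) \<noteq> \<infinity>"
    using semi_brjuno_bounds(1,3)[OF x] fin by auto
  then have sum: "summable (\<lambda>m. ?b (2 * m))" "summable (\<lambda>m. ?b (2 * m + 1))"
    and eq: "gauss_even_series (frac x) = ereal (\<Sum>m. ?b (2 * m))"
      "gauss_odd_series (frac x) = ereal (\<Sum>m. ?b (2 * m + 1))"
    unfolding gauss_even_series_def gauss_odd_series_def
    using nonneg by (simp_all add: summable_ereal suminf_ereal)
  have "wilton_partial x \<longlonglongrightarrow>
      real_of_ereal (gauss_even_series (frac x)) - real_of_ereal (gauss_odd_series (frac x))"
    using sums_alternating_even_odd[OF sum]
    unfolding eq sums_def wilton_partial_def brjuno_term_eq_orbit_term by simp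
  then show "wilton_converges x"
    and "\<bar>wilton x - (real_of_ereal (semi_brjuno x) - real_of_ereal (semi_brjuno (- x)))\<bar> \<le> 8"
    using ereal_sum_sandwich(3)[OF gauss_series_nonneg semi_brjuno_bounds[OF x, unfolded numeral_eq_ereal] fin]
    unfolding wilton_converges_def wilton_def by (auto simp: convergent_def limI)
qed

theorem theorem1:
  shows "\<exists>Cp Cm :: real. Cp > 0 \<and> Cm > 0 \<and>
    (\<forall>x :: real. x \<notin> \<rat> \<longrightarrow>
      ((brjuno x < \<infinity> \<longleftrightarrow> semi_brjuno x + semi_brjuno (- x) < \<infinity>) \<and>
       (brjuno x < \<infinity> \<longrightarrow>
          \<bar>real_of_ereal (brjuno x)
             - 2 * ((real_of_ereal (semi_brjuno x) + real_of_ereal (semi_brjuno (- x))) / 2)\<bar> \<le> Cp) \<and>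
       (semi_brjuno x < \<infinity> \<and> semi_brjuno (- x) < \<infinity> \<longrightarrow>
          wilton_converges x \<and>
          \<bar>wilton x
             - 2 * ((real_of_ereal (semi_brjuno x) - real_of_ereal (semi_brjuno (- x))) / 2)\<bar> \<le> Cm)))"
proof -
  have half: "2 * (r / 2) = r" for r :: real
    by simp
  show ?thesis
    unfolding half using brjuno_semi_brjuno_comparison wilton_semi_brjuno_comparison
    by (intro exI[of _ 16] exI[of _ 8]) auto
qed

end
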